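(* Let $E$ be a set and $\mathrm{Dup}(E)$ the free duplicial algebra on $E$. Let $\{E,E\}\subseteq\mathrm{Dup}(E)$ be the smallest subspace containing $E$ and closed under the bracket $\{x,y\}=x\backslash y-x/y$. Then every element of $\mathrm{Dup}(E)$ is a finite linear combination of elements $z_1/z_2/\cdots/z_n$ with $n\ge1$ and $z_1,\dots,z_n\in\{E,E\}$.
   Context: A duplicial algebra over a field $K$ is a vector space $A$ with two bilinear products $/$ and $\backslash$ satisfying $x/(y/z)=(x/y)/z$, $x/(y\backslash z)=(x/y)\backslash z$ and $x\backslash(y\backslash z)=(x\backslash y)\backslash z$ for all $x,y,z\in A$. $\mathrm{Dup}(E)$ is the free duplicial algebra generated by the set $E$ (it can be realized on planar binary rooted trees with internal vertices coloured by $E$). The product $/$ is associative, so iterated products $z_1/\cdots/z_n$ are unambiguous. *)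

theory Defs
  imports "HOL-Library.Poly_Mapping"
begin

text \<open>Planar binary rooted trees whose internal vertices are coloured by elements of type 'e.
  Leaf is the tree without internal vertex (not part of the basis of Dup(E)).\<close>
datatype 'e pbtree = Leaf | Node "'e pbtree" 'e "'e pbtree"

fun over_tree :: "'e pbtree \<Rightarrow> 'e pbtree \<Rightarrow> 'e pbtree" where
  "over_tree x Leaf = x"
| "over_tree x (Node l e r) = Node (over_tree x l) e r"

fun under_tree :: "'e pbtree \<Rightarrow> 'e pbtree \<Rightarrow> 'e pbtree" where
  "under_tree Leaf y = y"
| "under_tree (Node l e r) y = Node l e (under_tree r y)"

type_synonym ('e,'k) vec = "'e pbtree \<Rightarrow>\<^sub>0 'k"

definition scal :: "'k::field \<Rightarrow> ('e,'k) vec \<Rightarrow> ('e,'k) vec" where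
  "scal c f = Poly_Mapping.map (\<lambda>x. c * x) f"

definition bilin :: "('e pbtree \<Rightarrow> 'e pbtree \<Rightarrow> 'e pbtree)
    \<Rightarrow> ('e,'k::field) vec \<Rightarrow> ('e,'k) vec \<Rightarrow> ('e,'k) vec" where
  "bilin op f g = (\<Sum>a\<in>Poly_Mapping.keys f. \<Sum>b\<in>Poly_Mapping.keys g.
      Poly_Mapping.single (op a b) (Poly_Mapping.lookup f a * Poly_Mapping.lookup g b))"

definition dup_over :: "('e,'k::field) vec \<Rightarrow> ('e,'k) vec \<Rightarrow> ('e,'k) vec" where
  "dup_over = bilin over_tree"

definition dup_under :: "('e,'k::field) vec \<Rightarrow> ('e,'k) vec \<Rightarrow> ('e,'k) vec" where
  "dup_under = bilin under_tree"

definition Dup :: "'e set \<Rightarrow> ('e,'k::field) vec set" where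
  "Dup E = {f. \<forall>t\<in>Poly_Mapping.keys f. t \<noteq> Leaf \<and> set_pbtree t \<subseteq> E}"

definition gen :: "'e \<Rightarrow> ('e,'k::field) vec" where
  "gen e = Poly_Mapping.single (Node Leaf e Leaf) 1"

definition bracket :: "('e,'k::field) vec \<Rightarrow> ('e,'k) vec \<Rightarrow> ('e,'k) vec" where
  "bracket x y = dup_under x y - dup_over x y"

inductive_set EE :: "'e set \<Rightarrow> ('e,'k::field) vec set" for E where
  gen: "e \<in> E \<Longrightarrow> gen e \<in> EE E"
| zero: "0 \<in> EE E"
| add: "x \<in> EE E \<Longrightarrow> y \<in> EE E \<Longrightarrow> x + y \<in> EE E"
| smult: "x \<in> EE E \<Longrightarrow> scal c x \<in> EE E"
| brk: "x \<in> EE E \<Longrightarrow> y \<in> EE E \<Longrightarrow> bracket x y \<in> EE E"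

fun over_list :: "('e,'k::field) vec list \<Rightarrow> ('e,'k) vec" where
  "over_list [] = 0"
| "over_list [z] = z"
| "over_list (z # zs) = dup_over z (over_list zs)"

end

theory Submission
  imports Defs
begin

text \<open>A tree with root colour e and subtrees l, r equals l/(e\r). Let O be the span of the
  monomials z_1/.../z_n with z_i in {E,E}, and U the subspace generated by {E,E} under \.
  By induction on trees, every tree lies in O and in U once O\U \<subseteq> O and O/U \<subseteq> U.
  The duplicial axioms reduce both inclusions to a single factor from {E,E}, where they are
  the definition of the bracket: z\y = {z,y} + z/y and y/x = y\x - {y,x}.\<close>

lemma lookup_scal [simp]: "Poly_Mapping.lookup (scal c f) t = c * Poly_Mapping.lookup f t"
  unfolding scal_def by transfer (simp add: when_def)

lemma keys_scal_subset: "Poly_Mapping.keys (scal c f) \<subseteq> Poly_Mapping.keys f"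
  by (auto simp: in_keys_iff)

lemma scal_add: "scal c (f + g) = scal c f + scal c g"
  by (rule poly_mapping_eqI) (simp add: lookup_add distrib_left)

lemma scal_zero [simp]: "scal c 0 = 0"
  by (rule poly_mapping_eqI) simp

lemma scal_one [simp]: "scal 1 f = f"
  by (rule poly_mapping_eqI) simp

lemma scal_scal [simp]: "scal c (scal d f) = scal (c * d) f"
  by (rule poly_mapping_eqI) simp

lemma scal_minus_one: "scal (-1) f = - f"
  by (rule poly_mapping_eqI) simp

lemma scal_single: "scal c (Poly_Mapping.single t d) = Poly_Mapping.single t (c * d)"
  by (rule poly_mapping_eqI) (simp add: lookup_single when_def)

lemma scal_sum: "scal c (sum F S) = (\<Sum>s\<in>S. scal c (F s))"
  by (induction S rule: infinite_finite_induct) (simp_all add: scal_add)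

lemma poly_mapping_eq_sum_single:
  "f = (\<Sum>t\<in>Poly_Mapping.keys f. Poly_Mapping.single t (Poly_Mapping.lookup f t))"
proof -
  have "finite T \<Longrightarrow> Poly_Mapping.lookup (\<Sum>t\<in>T. Poly_Mapping.single t (Poly_Mapping.lookup f t)) u
          = (if u \<in> T then Poly_Mapping.lookup f u else 0)" for T u
    by (induction T rule: finite_induct) (auto simp: lookup_single lookup_add when_def)
  then show ?thesis
    by (intro poly_mapping_eqI) (fastforce simp: in_keys_iff)
qed

lemma bilin_eq_sum_supersets:
  assumes "finite A" "finite B" "Poly_Mapping.keys f \<subseteq> A" "Poly_Mapping.keys g \<subseteq> B"
  shows "bilin op f g = (\<Sum>a\<in>A. \<Sum>b\<in>B.
           Poly_Mapping.single (op a b) (Poly_Mapping.lookup f a * Poly_Mapping.lookup g b))"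
  unfolding bilin_def
proof (rule sum.mono_neutral_cong_left)
  fix a assume "a \<in> Poly_Mapping.keys f"
  then show "(\<Sum>b\<in>Poly_Mapping.keys g. Poly_Mapping.single (op a b) (Poly_Mapping.lookup f a * Poly_Mapping.lookup g b))
      = (\<Sum>b\<in>B. Poly_Mapping.single (op a b) (Poly_Mapping.lookup f a * Poly_Mapping.lookup g b))"
    using assms by (intro sum.mono_neutral_left) (auto simp: in_keys_iff)
qed (use assms in \<open>auto simp: in_keys_iff\<close>)

lemma bilin_add_left: "bilin op (f + g) h = bilin op f h + bilin op g h"
proof -
  let ?A = "Poly_Mapping.keys f \<union> Poly_Mapping.keys g"
  have "bilin op F h = (\<Sum>a\<in>?A. \<Sum>b\<in>Poly_Mapping.keys h.
          Poly_Mapping.single (op a b) (Poly_Mapping.lookup F a * Poly_Mapping.lookup h b))"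
    if "Poly_Mapping.keys F \<subseteq> ?A" for F
    using that by (intro bilin_eq_sum_supersets) auto
  from this[of "f + g"] this[of f] this[of g] keys_add[of f g] show ?thesis
    by (simp add: lookup_add distrib_right single_add sum.distrib)
qed

lemma bilin_add_right: "bilin op h (f + g) = bilin op h f + bilin op h g"
proof -
  let ?B = "Poly_Mapping.keys f \<union> Poly_Mapping.keys g"
  have "bilin op h G = (\<Sum>a\<in>Poly_Mapping.keys h. \<Sum>b\<in>?B.
          Poly_Mapping.single (op a b) (Poly_Mapping.lookup h a * Poly_Mapping.lookup G b))"
    if "Poly_Mapping.keys G \<subseteq> ?B" for G
    using that by (intro bilin_eq_sum_supersets) auto
  from this[of "f + g"] this[of f] this[of g] keys_add[of f g] show ?thesis
    by (simp add: lookup_add distrib_left single_add sum.distrib)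
qed

lemma bilin_scal_left: "bilin op (scal c f) g = scal c (bilin op f g)"
proof -
  have "bilin op (scal c f) g = (\<Sum>a\<in>Poly_Mapping.keys f. \<Sum>b\<in>Poly_Mapping.keys g.
          Poly_Mapping.single (op a b) (Poly_Mapping.lookup (scal c f) a * Poly_Mapping.lookup g b))"
    using keys_scal_subset by (intro bilin_eq_sum_supersets) auto
  then show ?thesis
    unfolding bilin_def[of op f g] by (simp add: scal_sum scal_single mult.assoc)
qed

lemma bilin_scal_right: "bilin op f (scal c g) = scal c (bilin op f g)"
proof -
  have "bilin op f (scal c g) = (\<Sum>a\<in>Poly_Mapping.keys f. \<Sum>b\<in>Poly_Mapping.keys g.
          Poly_Mapping.single (op a b) (Poly_Mapping.lookup f a * Poly_Mapping.lookup (scal c g) b))"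
    using keys_scal_subset by (intro bilin_eq_sum_supersets) auto
  then show ?thesis
    unfolding bilin_def[of op f g] by (simp add: scal_sum scal_single mult.left_commute)
qed

lemma bilin_zero_left: "bilin op 0 g = 0"
  by (simp add: bilin_def)

lemma bilin_zero_right: "bilin op f 0 = 0"
  by (simp add: bilin_def)

lemmas bilin_linear =
  bilin_add_left bilin_add_right bilin_scal_left bilin_scal_right bilin_zero_left bilin_zero_right

lemma bilin_sum_left: "bilin op (sum F S) g = (\<Sum>s\<in>S. bilin op (F s) g)"
  by (induction S rule: infinite_finite_induct) (simp_all add: bilin_linear)

lemma bilin_sum_right: "bilin op f (sum G S) = (\<Sum>s\<in>S. bilin op f (G s))"
  by (induction S rule: infinite_finite_induct) (simp_all add: bilin_linear)

lemma bilin_single_left: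
  "bilin op (Poly_Mapping.single a c) g
     = (\<Sum>b\<in>Poly_Mapping.keys g. Poly_Mapping.single (op a b) (c * Poly_Mapping.lookup g b))"
  by (subst bilin_eq_sum_supersets[of "{a}" "Poly_Mapping.keys g"]) auto

lemma bilin_single_right:
  "bilin op f (Poly_Mapping.single b d)
     = (\<Sum>a\<in>Poly_Mapping.keys f. Poly_Mapping.single (op a b) (Poly_Mapping.lookup f a * d))"
  by (subst bilin_eq_sum_supersets[of "Poly_Mapping.keys f" "{b}"]) auto

lemma bilin_single_single:
  "bilin op (Poly_Mapping.single a c) (Poly_Mapping.single b d) = Poly_Mapping.single (op a b) (c * d)"
  by (simp add: bilin_single_left)

lemma bilin_assoc:
  assumes "\<And>a b c. a \<in> Poly_Mapping.keys x \<Longrightarrow> b \<in> Poly_Mapping.keys y \<Longrightarrow> c \<in> Poly_Mapping.keys z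
             \<Longrightarrow> op1 a (op2 b c) = op3 (op4 a b) c"
  shows "bilin op1 x (bilin op2 y z) = bilin op3 (bilin op4 x y) z"
proof -
  let ?l = "Poly_Mapping.lookup"
  have "bilin op1 x (bilin op2 y z) = (\<Sum>b\<in>Poly_Mapping.keys y. \<Sum>c\<in>Poly_Mapping.keys z.
      \<Sum>a\<in>Poly_Mapping.keys x. Poly_Mapping.single (op1 a (op2 b c)) (?l x a * (?l y b * ?l z c)))"
    unfolding bilin_def[of op2 y z] by (simp only: bilin_sum_right bilin_single_right)
  also have "\<dots> = (\<Sum>a\<in>Poly_Mapping.keys x. \<Sum>b\<in>Poly_Mapping.keys y. \<Sum>c\<in>Poly_Mapping.keys z.
      Poly_Mapping.single (op1 a (op2 b c)) (?l x a * (?l y b * ?l z c)))"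
    by (subst sum.swap) (simp only: sum.swap[where A = "Poly_Mapping.keys z"])
  also have "\<dots> = (\<Sum>a\<in>Poly_Mapping.keys x. \<Sum>b\<in>Poly_Mapping.keys y. \<Sum>c\<in>Poly_Mapping.keys z.
      Poly_Mapping.single (op3 (op4 a b) c) (?l x a * ?l y b * ?l z c))"
    by (intro sum.cong refl) (simp add: assms mult.assoc)
  also have "\<dots> = bilin op3 (bilin op4 x y) z"
    unfolding bilin_def[of op4 x y] by (simp only: bilin_sum_left bilin_single_left)
  finally show ?thesis .
qed

lemma keys_bilin_subset:
  "Poly_Mapping.keys (bilin op f g)
     \<subseteq> {op a b | a b. a \<in> Poly_Mapping.keys f \<and> b \<in> Poly_Mapping.keys g}"
  unfolding bilin_def
  by (rule order.trans[OF keys_sum UN_least], rule order.trans[OF keys_sum]) auto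

lemma over_tree_assoc: "over_tree x (over_tree y z) = over_tree (over_tree x y) z"
  by (induction z) auto

lemma under_tree_assoc: "under_tree x (under_tree y z) = under_tree (under_tree x y) z"
  by (induction x) auto

lemma over_under_tree_assoc: "y \<noteq> Leaf \<Longrightarrow> over_tree x (under_tree y z) = under_tree (over_tree x y) z"
  by (cases y) auto

lemma over_tree_eq_Leaf_iff: "over_tree x y = Leaf \<longleftrightarrow> x = Leaf \<and> y = Leaf"
  by (cases y) auto

lemma under_tree_eq_Leaf_iff: "under_tree x y = Leaf \<longleftrightarrow> x = Leaf \<and> y = Leaf"
  by (cases x) auto

lemma set_over_tree: "set_pbtree (over_tree x y) = set_pbtree x \<union> set_pbtree y"
  by (induction y) auto

lemma set_under_tree: "set_pbtree (under_tree x y) = set_pbtree x \<union> set_pbtree y"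
  by (induction x) auto

lemmas dup_over_linear [simp] = bilin_linear[where op = over_tree, folded dup_over_def]
lemmas dup_under_linear [simp] = bilin_linear[where op = under_tree, folded dup_under_def]

lemma dup_over_assoc: "dup_over x (dup_over y z) = dup_over (dup_over x y) z"
  unfolding dup_over_def by (rule bilin_assoc) (rule over_tree_assoc)

lemma dup_under_assoc: "dup_under x (dup_under y z) = dup_under (dup_under x y) z"
  unfolding dup_under_def by (rule bilin_assoc) (rule under_tree_assoc)

text \<open>The hypothesis excludes the unit Leaf of both tree products, for which the two sides
  are x/z and x\z.\<close>
lemma dup_over_under_assoc:
  "Leaf \<notin> Poly_Mapping.keys y \<Longrightarrow> dup_over x (dup_under y z) = dup_under (dup_over x y) z"
  unfolding dup_over_def dup_under_def by (rule bilin_assoc) (auto intro: over_under_tree_assoc)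

lemma dup_over_single_single:
  "dup_over (Poly_Mapping.single a c) (Poly_Mapping.single b d) = Poly_Mapping.single (over_tree a b) (c * d)"
  by (simp add: dup_over_def bilin_single_single)

lemma dup_under_single_single:
  "dup_under (Poly_Mapping.single a c) (Poly_Mapping.single b d) = Poly_Mapping.single (under_tree a b) (c * d)"
  by (simp add: dup_under_def bilin_single_single)

definition vec_subspace :: "('e,'k::field) vec set \<Rightarrow> bool" where
  "vec_subspace V \<longleftrightarrow> 0 \<in> V \<and> (\<forall>x\<in>V. \<forall>y\<in>V. x + y \<in> V) \<and> (\<forall>c. \<forall>x\<in>V. scal c x \<in> V)"

lemma vec_subspace_zero: "vec_subspace V \<Longrightarrow> 0 \<in> V"
  and vec_subspace_add: "vec_subspace V \<Longrightarrow> x \<in> V \<Longrightarrow> y \<in> V \<Longrightarrow> x + y \<in> V"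
  and vec_subspace_scal: "vec_subspace V \<Longrightarrow> x \<in> V \<Longrightarrow> scal c x \<in> V"
  unfolding vec_subspace_def by blast+

lemma vec_subspace_diff: "vec_subspace V \<Longrightarrow> x \<in> V \<Longrightarrow> y \<in> V \<Longrightarrow> x - y \<in> V"
  using scal_minus_one[of y] unfolding vec_subspace_def by (metis diff_conv_add_uminus)

lemma vec_subspace_sum: "vec_subspace V \<Longrightarrow> (\<And>s. s \<in> S \<Longrightarrow> F s \<in> V) \<Longrightarrow> sum F S \<in> V"
  unfolding vec_subspace_def by (induction S rule: infinite_finite_induct) auto

lemma vec_subspace_Dup: "vec_subspace (Dup E)"
  unfolding vec_subspace_def Dup_def
  by (auto dest!: keys_add[THEN subsetD] keys_scal_subset[THEN subsetD])

lemma bilin_in_Dup: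
  assumes "\<And>a b. a \<noteq> Leaf \<Longrightarrow> b \<noteq> Leaf \<Longrightarrow> op a b \<noteq> Leaf"
    and "\<And>a b. set_pbtree (op a b) \<subseteq> set_pbtree a \<union> set_pbtree b"
    and "f \<in> Dup E" "g \<in> Dup E"
  shows "bilin op f g \<in> Dup E"
  unfolding Dup_def
proof (intro CollectI ballI)
  fix t assume "t \<in> Poly_Mapping.keys (bilin op f g)"
  then obtain a b where "t = op a b" "a \<in> Poly_Mapping.keys f" "b \<in> Poly_Mapping.keys g"
    using keys_bilin_subset by blast
  moreover have "a \<noteq> Leaf \<and> set_pbtree a \<subseteq> E" "b \<noteq> Leaf \<and> set_pbtree b \<subseteq> E"
    using assms(3,4) \<open>a \<in> _\<close> \<open>b \<in> _\<close> unfolding Dup_def by auto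
  ultimately show "t \<noteq> Leaf \<and> set_pbtree t \<subseteq> E"
    using assms(1)[of a b] assms(2)[of a b] by auto
qed

lemma dup_over_in_Dup: "f \<in> Dup E \<Longrightarrow> g \<in> Dup E \<Longrightarrow> dup_over f g \<in> Dup E"
  unfolding dup_over_def by (rule bilin_in_Dup) (auto simp: over_tree_eq_Leaf_iff set_over_tree)

lemma dup_under_in_Dup: "f \<in> Dup E \<Longrightarrow> g \<in> Dup E \<Longrightarrow> dup_under f g \<in> Dup E"
  unfolding dup_under_def by (rule bilin_in_Dup) (auto simp: under_tree_eq_Leaf_iff set_under_tree)

lemma EE_subset_Dup: "EE E \<subseteq> Dup E"
proof
  fix x assume "x \<in> EE E"
  then show "x \<in> Dup E"
  proof (induction rule: EE.induct)
    case (gen e)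
    then show ?case by (simp add: gen_def Dup_def)
  next
    case (brk x y)
    then show ?case
      unfolding bracket_def
      by (intro vec_subspace_diff vec_subspace_Dup dup_under_in_Dup dup_over_in_Dup)
  qed (auto intro: vec_subspace_Dup vec_subspace_zero vec_subspace_add vec_subspace_scal)
qed

inductive_set lin_span :: "('e,'k::field) vec set \<Rightarrow> ('e,'k) vec set" for S where
  base: "x \<in> S \<Longrightarrow> x \<in> lin_span S"
| zero: "0 \<in> lin_span S"
| add: "x \<in> lin_span S \<Longrightarrow> y \<in> lin_span S \<Longrightarrow> x + y \<in> lin_span S"
| scal: "x \<in> lin_span S \<Longrightarrow> scal c x \<in> lin_span S"

lemma vec_subspace_lin_span: "vec_subspace (lin_span S)"
  unfolding vec_subspace_def by (auto intro: lin_span.intros)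

lemma lin_span_linear_into_subspace:
  assumes "x \<in> lin_span S" "vec_subspace V" "\<And>s. s \<in> S \<Longrightarrow> L s \<in> V"
    and "L 0 = 0" "\<And>x y. L (x + y) = L x + L y" "\<And>c x. L (scal c x) = scal c (L x)"
  shows "L x \<in> V"
  using assms(1)
  by induction (simp_all add: assms(3-6) vec_subspace_zero vec_subspace_add vec_subspace_scal assms(2))

lemma sum_lessThan_concat:
  "(\<Sum>i<m. F i) + (\<Sum>i<n. G i) = (\<Sum>i<m + (n::nat). if i < m then F i else G (i - m))"
  by (induction n) (simp_all add: add.assoc[symmetric])

lemma lin_span_image_imp_combination:
  "x \<in> lin_span (g ` P) \<Longrightarrow> \<exists>(m::nat) c ps. (\<forall>i<m. ps i \<in> P) \<and> x = (\<Sum>i<m. scal (c i) (g (ps i)))"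
proof (induction rule: lin_span.induct)
  case (base x)
  then obtain p where "p \<in> P" "x = g p" by blast
  then show ?case by (intro exI[of _ "1::nat"] exI[of _ "\<lambda>_. 1"] exI[of _ "\<lambda>_. p"]) simp
next
  case zero
  show ?case by (intro exI[of _ 0]) simp
next
  case (add x y)
  then obtain m c ps n d qs where
    "\<forall>i<(m::nat). ps i \<in> P" "x = (\<Sum>i<m. scal (c i) (g (ps i)))"
    "\<forall>i<(n::nat). qs i \<in> P" "y = (\<Sum>i<n. scal (d i) (g (qs i)))"
    by blast
  then show ?case
    by (intro exI[of _ "m + n"] exI[of _ "\<lambda>i. if i < m then c i else d (i - m)"]
          exI[of _ "\<lambda>i. if i < m then ps i else qs (i - m)"])
       (auto simp: sum_lessThan_concat intro!: sum.cong)
next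
  case (scal x a)
  then obtain m c ps where "\<forall>i<(m::nat). ps i \<in> P" "x = (\<Sum>i<m. scal (c i) (g (ps i)))"
    by blast
  then show ?case
    by (intro exI[of _ m] exI[of _ "\<lambda>i. a * c i"] exI[of _ ps]) (simp add: scal_sum)
qed

inductive_set under_subalgebra :: "('e,'k::field) vec set \<Rightarrow> ('e,'k) vec set" for S where
  base: "x \<in> S \<Longrightarrow> x \<in> under_subalgebra S"
| zero: "0 \<in> under_subalgebra S"
| add: "x \<in> under_subalgebra S \<Longrightarrow> y \<in> under_subalgebra S \<Longrightarrow> x + y \<in> under_subalgebra S"
| scal: "x \<in> under_subalgebra S \<Longrightarrow> scal c x \<in> under_subalgebra S"
| under: "x \<in> under_subalgebra S \<Longrightarrow> y \<in> under_subalgebra S \<Longrightarrow> dup_under x y \<in> under_subalgebra S"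

lemma vec_subspace_under_subalgebra: "vec_subspace (under_subalgebra S)"
  unfolding vec_subspace_def by (auto intro: under_subalgebra.intros)

lemma under_subalgebra_subset_Dup:
  assumes "S \<subseteq> Dup E"
  shows "under_subalgebra S \<subseteq> Dup E"
proof
  fix x assume "x \<in> under_subalgebra S"
  then show "x \<in> Dup E"
    using assms
    by (induction rule: under_subalgebra.induct)
       (auto intro: vec_subspace_Dup vec_subspace_zero vec_subspace_add vec_subspace_scal dup_under_in_Dup)
qed

lemma over_list_Cons: "zs \<noteq> [] \<Longrightarrow> over_list (z # zs) = dup_over z (over_list zs)"
  by (cases zs) auto

lemma over_list_append:
  "zs \<noteq> [] \<Longrightarrow> ws \<noteq> [] \<Longrightarrow> over_list (zs @ ws) = dup_over (over_list zs) (over_list ws)"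
  by (induction zs rule: over_list.induct) (auto simp: over_list_Cons dup_over_assoc)

lemma over_list_in_Dup: "zs \<noteq> [] \<Longrightarrow> set zs \<subseteq> Dup E \<Longrightarrow> over_list zs \<in> Dup E"
  by (induction zs rule: over_list.induct) (auto intro: dup_over_in_Dup)

definition over_monomials :: "'e set \<Rightarrow> ('e,'k::field) vec set" where
  "over_monomials E = over_list ` {zs. zs \<noteq> [] \<and> set zs \<subseteq> EE E}"

lemma over_monomialsE:
  assumes "s \<in> over_monomials E"
  obtains zs where "zs \<noteq> []" "set zs \<subseteq> EE E" "s = over_list zs"
  using assms unfolding over_monomials_def by blast

lemma over_list_in_over_span:
  "zs \<noteq> [] \<Longrightarrow> set zs \<subseteq> EE E \<Longrightarrow> over_list zs \<in> lin_span (over_monomials E)"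
  unfolding over_monomials_def by (auto intro: lin_span.base)

lemma EE_in_over_span: "x \<in> EE E \<Longrightarrow> x \<in> lin_span (over_monomials E)"
  using over_list_in_over_span[of "[x]"] by simp

lemma dup_over_in_over_span:
  fixes x y :: "('e,'k::field) vec"
  assumes "x \<in> lin_span (over_monomials E)" "y \<in> lin_span (over_monomials E)"
  shows "dup_over x y \<in> lin_span (over_monomials E)"
  using assms(1)
proof (rule lin_span_linear_into_subspace[where L = "\<lambda>x. dup_over x y"])
  fix s :: "('e,'k) vec" assume "s \<in> over_monomials E"
  then obtain zs where zs: "zs \<noteq> []" "set zs \<subseteq> EE E" "s = over_list zs"
    by (rule over_monomialsE)
  show "dup_over s y \<in> lin_span (over_monomials E)"
    using assms(2)
  proof (rule lin_span_linear_into_subspace[where L = "\<lambda>y. dup_over s y"])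
    fix t :: "('e,'k) vec" assume "t \<in> over_monomials E"
    then obtain ws where "ws \<noteq> []" "set ws \<subseteq> EE E" "t = over_list ws"
      by (rule over_monomialsE)
    with zs show "dup_over s t \<in> lin_span (over_monomials E)"
      using over_list_in_over_span[of "zs @ ws"] by (simp add: over_list_append)
  qed (simp_all add: vec_subspace_lin_span)
qed (simp_all add: vec_subspace_lin_span)

lemma Leaf_notin_keys_if_Dup: "f \<in> Dup E \<Longrightarrow> Leaf \<notin> Poly_Mapping.keys f"
  unfolding Dup_def by blast

lemma dup_under_over_list_EE_in_over_span:
  "zs \<noteq> [] \<Longrightarrow> set zs \<subseteq> EE E \<Longrightarrow> y \<in> EE E
    \<Longrightarrow> dup_under (over_list zs) y \<in> lin_span (over_monomials E)"
proof (induction zs rule: over_list.induct)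
  case (2 z)
  have "dup_under z y = bracket z y + dup_over z y"
    by (simp add: bracket_def)
  with 2 show ?case
    by (auto intro: lin_span.add EE.brk EE_in_over_span dup_over_in_over_span)
next
  case (3 z v vs)
  have "over_list (v # vs) \<in> Dup E"
    using 3 EE_subset_Dup by (intro over_list_in_Dup) auto
  then have "dup_under (over_list (z # v # vs)) y = dup_over z (dup_under (over_list (v # vs)) y)"
    by (simp add: dup_over_under_assoc Leaf_notin_keys_if_Dup)
  with 3 show ?case
    by (auto intro: EE_in_over_span dup_over_in_over_span)
qed simp

lemma dup_under_EE_in_over_span:
  fixes x y :: "('e,'k::field) vec"
  assumes "x \<in> lin_span (over_monomials E)" "y \<in> EE E"
  shows "dup_under x y \<in> lin_span (over_monomials E)"
  using assms(1)
proof (rule lin_span_linear_into_subspace[where L = "\<lambda>x. dup_under x y"])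
  fix s :: "('e,'k) vec" assume "s \<in> over_monomials E"
  then obtain zs where "zs \<noteq> []" "set zs \<subseteq> EE E" "s = over_list zs"
    by (rule over_monomialsE)
  with assms(2) show "dup_under s y \<in> lin_span (over_monomials E)"
    by (simp add: dup_under_over_list_EE_in_over_span)
qed (simp_all add: vec_subspace_lin_span)

lemma dup_under_in_over_span:
  "w \<in> under_subalgebra (EE E) \<Longrightarrow> x \<in> lin_span (over_monomials E)
    \<Longrightarrow> dup_under x w \<in> lin_span (over_monomials E)"
proof (induction w arbitrary: x rule: under_subalgebra.induct)
  case (under a b)
  then show ?case by (simp add: dup_under_assoc)
qed (simp_all add: dup_under_EE_in_over_span lin_span.intros)

lemma dup_over_EE_in_under_subalgebra:
  "x \<in> under_subalgebra (EE E) \<Longrightarrow> y \<in> EE E \<Longrightarrow> dup_over y x \<in> under_subalgebra (EE E)"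
proof (induction x rule: under_subalgebra.induct)
  case (base x)
  have "dup_over y x = dup_under y x - bracket y x"
    by (simp add: bracket_def)
  with base show ?case
    by (auto intro: vec_subspace_diff vec_subspace_under_subalgebra under_subalgebra.intros EE.brk)
next
  case (under a b)
  have "a \<in> Dup E"
    using under.hyps(1) under_subalgebra_subset_Dup[OF EE_subset_Dup] by blast
  then have "dup_over y (dup_under a b) = dup_under (dup_over y a) b"
    by (simp add: dup_over_under_assoc Leaf_notin_keys_if_Dup)
  with under show ?case
    by (simp add: under_subalgebra.under)
qed (simp_all add: under_subalgebra.intros)

lemma dup_over_in_under_subalgebra:
  fixes w x :: "('e,'k::field) vec"
  assumes "w \<in> lin_span (over_monomials E)" "x \<in> under_subalgebra (EE E)"
  shows "dup_over w x \<in> under_subalgebra (EE E)"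
  using assms(1)
proof (rule lin_span_linear_into_subspace[where L = "\<lambda>w. dup_over w x"])
  have monomial: "dup_over (over_list zs) x \<in> under_subalgebra (EE E)"
    if "zs \<noteq> []" "set zs \<subseteq> EE E" for zs
    using that
    by (induction zs rule: over_list.induct)
       (auto simp: over_list_Cons dup_over_assoc[symmetric] assms(2) dup_over_EE_in_under_subalgebra)
  show "dup_over s x \<in> under_subalgebra (EE E)" if "s \<in> over_monomials E" for s :: "('e,'k) vec"
    using that by (rule over_monomialsE) (simp add: monomial)
qed (simp_all add: vec_subspace_under_subalgebra)

lemma single_tree_in_over_span_and_under_subalgebra:
  assumes "t \<noteq> Leaf" "set_pbtree t \<subseteq> E"
  shows "(Poly_Mapping.single t 1 :: ('e,'k::field) vec) \<in> lin_span (over_monomials E)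
    \<and> (Poly_Mapping.single t 1 :: ('e,'k) vec) \<in> under_subalgebra (EE E)"
  using assms
proof (induction t)
  case (Node l e r)
  let ?single = "\<lambda>t. Poly_Mapping.single t 1 :: ('e,'k) vec"
  have e: "(gen e :: ('e,'k) vec) \<in> EE E"
    using Node.prems by (auto intro: EE.gen)
  have right: "?single (Node Leaf e r) \<in> lin_span (over_monomials E)
      \<and> ?single (Node Leaf e r) \<in> under_subalgebra (EE E)"
  proof (cases "r = Leaf")
    case True
    then show ?thesis
      using e by (simp add: gen_def EE_in_over_span under_subalgebra.base)
  next
    case False
    then have "?single r \<in> under_subalgebra (EE E)"
      using Node by auto
    moreover have "dup_under (gen e) (?single r) = ?single (Node Leaf e r)"
      by (simp add: gen_def dup_under_single_single)
    ultimately show ?thesis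
      using e by (metis EE_in_over_span dup_under_in_over_span under_subalgebra.base under_subalgebra.under)
  qed
  show ?case
  proof (cases "l = Leaf")
    case True
    with right show ?thesis by simp
  next
    case False
    then have "?single l \<in> lin_span (over_monomials E)"
      using Node by auto
    moreover have "dup_over (?single l) (?single (Node Leaf e r)) = ?single (Node l e r)"
      by (simp add: dup_over_single_single)
    ultimately show ?thesis
      using right by (metis dup_over_in_over_span dup_over_in_under_subalgebra)
  qed
qed simp

lemma Dup_subset_over_span: "(Dup E :: ('e,'k::field) vec set) \<subseteq> lin_span (over_monomials E)"
proof
  fix f :: "('e,'k) vec" assume f: "f \<in> Dup E"
  have "f = (\<Sum>t\<in>Poly_Mapping.keys f. scal (Poly_Mapping.lookup f t) (Poly_Mapping.single t 1))"
    by (subst poly_mapping_eq_sum_single) (simp add: scal_single)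
  also have "\<dots> \<in> lin_span (over_monomials E)"
    using f unfolding Dup_def
    by (intro vec_subspace_sum vec_subspace_lin_span lin_span.scal)
       (simp add: single_tree_in_over_span_and_under_subalgebra)
  finally show "f \<in> lin_span (over_monomials E)" .
qed

theorem mainTheorem20:
  fixes E :: "'e set" and f :: "('e, 'k::field) vec"
  assumes "f \<in> Dup E"
  shows "\<exists>m (c :: nat \<Rightarrow> 'k) (zs :: nat \<Rightarrow> ('e,'k) vec list).
           (\<forall>i<m. zs i \<noteq> [] \<and> set (zs i) \<subseteq> EE E) \<and>
           f = (\<Sum>i<m. scal (c i) (over_list (zs i)))"
proof -
  have "f \<in> lin_span (over_list ` {zs. zs \<noteq> [] \<and> set zs \<subseteq> EE E})"
    using assms Dup_subset_over_span unfolding over_monomials_def by blast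
  from lin_span_image_imp_combination[OF this] show ?thesis
    by simp
qed

end
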